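(* Let $T\in(\mathbb{C}^n)^{\otimes3}$ be a symmetric tensor with $T=\sum_{i=1}^r u_i^{\otimes3}$, where $u_1,\dots,u_r\in\mathbb{C}^n$ are linearly independent. Let $T_1,\dots,T_n$ be the slices of $T$, let $S\subset\mathbb{C}$ be a finite set, pick $\alpha_1,\dots,\alpha_n$ uniformly and independently at random from $S$, and set $T^{(\alpha)}=\sum_{i=1}^n\alpha_iT_i$. Let $T^{(\alpha)}=P_r\Sigma Q_r^*$ be a compact singular value decomposition, and let $p_1,\dots,p_r$ be the columns of $P_r$. Then, with probability at least $1-\frac{r}{|S|}$, $P_r$ is a semi-unitary $n\times r$ matrix with $\mathrm{span}\{p_1,\dots,p_r\}=\mathrm{span}\{u_1,\dots,u_r\}$.
   Context: The $k$-th slice of $T=(T_{ijk})$ is $T_k=(T_{ijk})_{i,j}$. A matrix $P\in\mathbb{C}^{n\times r}$ is semi-unitary if $P^*P=I_r$. For a matrix $M\in\mathbb{C}^{m\times n}$ of rank $s$, a compact singular value decomposition is a factorization $M=U_s\Sigma_sV_s^*$ with $\Sigma_s$ an $s\times s$ diagonal matrix with positive diagonal entries and $U_s\in\mathbb{C}^{m\times s}$, $V_s\in\mathbb{C}^{n\times s}$ semi-unitary. *)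

theory Defs
  imports "Jordan_Normal_Form.Schur_Decomposition" "Jordan_Normal_Form.DL_Rank"
    "HOL-Probability.Probability_Mass_Function"
begin

definition cspan :: "nat \<Rightarrow> complex Matrix.vec set \<Rightarrow> complex Matrix.vec set" where
  "cspan n A = LinearCombinations.module.span class_ring (module_vec TYPE(complex) n) A"

definition clin_indpt :: "nat \<Rightarrow> complex Matrix.vec set \<Rightarrow> bool" where
  "clin_indpt n A = LinearCombinations.module.lin_indpt class_ring (module_vec TYPE(complex) n) A"

definition semi_unitary :: "complex mat \<Rightarrow> bool" where
  "semi_unitary P \<longleftrightarrow> mat_adjoint P * P = 1\<^sub>m (dim_col P)"

definition compact_svd :: "complex mat \<Rightarrow> nat \<Rightarrow> complex mat \<Rightarrow> complex mat \<Rightarrow> complex mat \<Rightarrow> bool" where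
  "compact_svd M s U \<Sigma> V \<longleftrightarrow>
     vec_space.rank (dim_row M) M = s \<and>
     U \<in> carrier_mat (dim_row M) s \<and> \<Sigma> \<in> carrier_mat s s \<and> V \<in> carrier_mat (dim_col M) s \<and>
     diagonal_mat \<Sigma> \<and> (\<forall>i<s. \<Sigma> $$ (i,i) \<in> \<real> \<and> Re (\<Sigma> $$ (i,i)) > 0) \<and>
     semi_unitary U \<and> semi_unitary V \<and>
     M = U * \<Sigma> * mat_adjoint V"

definition sym_tensor :: "nat \<Rightarrow> (nat \<Rightarrow> complex Matrix.vec) \<Rightarrow> nat \<Rightarrow> nat \<Rightarrow> nat \<Rightarrow> complex" where
  "sym_tensor r u i j k = (\<Sum>l<r. u l $ i * u l $ j * u l $ k)"

definition slice :: "nat \<Rightarrow> (nat \<Rightarrow> nat \<Rightarrow> nat \<Rightarrow> complex) \<Rightarrow> nat \<Rightarrow> complex mat" where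
  "slice n T k = Matrix.mat n n (\<lambda>(i,j). T i j k)"

definition slice_comb :: "nat \<Rightarrow> (nat \<Rightarrow> nat \<Rightarrow> nat \<Rightarrow> complex) \<Rightarrow> (nat \<Rightarrow> complex) \<Rightarrow> complex mat" where
  "slice_comb n T \<alpha> = Matrix.mat n n (\<lambda>(i,j). \<Sum>k<n. \<alpha> k * slice n T k $$ (i,j))"

end

theory Submission
  imports Defs
begin

text \<open>Let \<open>U\<close> be the matrix with columns \<open>u\<^sub>1, \<dots>, u\<^sub>r\<close>. The slice combination factors as
  \<open>T(\<alpha>) = U D U\<^sup>T\<close> with \<open>D\<close> diagonal, \<open>D\<^sub>l\<^sub>l = \<Sum>\<^sub>k \<alpha>\<^sub>k u\<^sub>l\<^sub>k\<close>. The Gram matrix \<open>U\<^sup>* U\<close> is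
  invertible, so \<open>U\<close> has a left inverse \<open>L\<close>, and if no \<open>D\<^sub>l\<^sub>l\<close> vanishes then \<open>L\<^sup>T D\<^sup>-\<^sup>1\<close> is a
  right inverse of \<open>D U\<^sup>T\<close>; hence \<open>T(\<alpha>)\<close> has the column space of \<open>U\<close> and rank \<open>r\<close>. In the
  same way \<open>Q \<Sigma>\<^sup>-\<^sup>1\<close> is a right inverse of \<open>\<Sigma> Q\<^sup>*\<close>, so \<open>P\<close> spans the column space of
  \<open>T(\<alpha>) = P (\<Sigma> Q\<^sup>*)\<close>. Each \<open>D\<^sub>l\<^sub>l\<close> is a nonzero linear form in \<open>\<alpha>\<close>; solving it for a
  coordinate with nonzero coefficient shows that it vanishes on at most a \<open>1/|S|\<close> fraction of
  \<open>S\<^sup>n\<close>, and a union bound over \<open>l\<close> finishes the proof.\<close>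

lemma (in vec_space) col_space_mult_subset:
  assumes A: "A \<in> carrier_mat n k" and B: "B \<in> carrier_mat k m"
  shows "col_space (A * B) \<subseteq> col_space A"
proof
  fix y assume "y \<in> col_space (A * B)"
  moreover have AB: "A * B \<in> carrier_mat n m" using A B by simp
  ultimately obtain x where x: "x \<in> carrier_vec m" and y: "y = (A * B) *\<^sub>v x" and yc: "y \<in> carrier_vec n"
    using col_space_eq[OF AB] by auto
  have "y = A *\<^sub>v (B *\<^sub>v x)" using A B x y by (simp add: assoc_mult_mat_vec)
  then show "y \<in> col_space A"
    using col_space_eq[OF A] A B x yc by auto
qed

lemma (in vec_space) col_space_mult_right_invertible:
  assumes A: "A \<in> carrier_mat n k" and B: "B \<in> carrier_mat k m" and C: "C \<in> carrier_mat m k"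
    and BC: "B * C = 1\<^sub>m k"
  shows "col_space (A * B) = col_space A"
proof
  show "col_space (A * B) \<subseteq> col_space A" by (rule col_space_mult_subset[OF A B])
  have "A = A * B * C" using A B C BC by (simp add: assoc_mult_mat)
  then show "col_space A \<subseteq> col_space (A * B)"
    using col_space_mult_subset[of "A * B" m C] A B C by (metis mult_carrier_mat)
qed

lemma diagonal_mat_right_inverse:
  fixes A :: "'a :: field mat"
  assumes A: "A \<in> carrier_mat n n" and "diagonal_mat A" and "\<And>i. i < n \<Longrightarrow> A $$ (i,i) \<noteq> 0"
  shows "A * mat_diag n (\<lambda>i. inverse (A $$ (i,i))) = 1\<^sub>m n"
  using assms by (auto simp: mat_diag_mult_right[OF A] diagonal_mat_def intro!: eq_matI)

lemma mat_adjoint_carrier [simp]: "A \<in> carrier_mat n m \<Longrightarrow> mat_adjoint A \<in> carrier_mat m n"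
  unfolding mat_adjoint_def by auto

lemma compact_svd_col_space:
  assumes "compact_svd M s P \<Sigma> Q"
  shows "vec_space.col_space (dim_row M) M = vec_space.col_space (dim_row M) P"
proof -
  interpret vec_space "TYPE(complex)" "dim_row M" .
  from assms have P: "P \<in> carrier_mat (dim_row M) s" and \<Sigma>: "\<Sigma> \<in> carrier_mat s s"
    and Q: "Q \<in> carrier_mat (dim_col M) s" and diag: "diagonal_mat \<Sigma>"
    and pos: "\<forall>i<s. Re (\<Sigma> $$ (i,i)) > 0"
    and "semi_unitary Q" and M: "M = P * \<Sigma> * mat_adjoint Q"
    unfolding compact_svd_def by blast+
  then have QQ: "mat_adjoint Q * Q = 1\<^sub>m s" unfolding semi_unitary_def by simp
  define \<Sigma>' where "\<Sigma>' = mat_diag s (\<lambda>i. inverse (\<Sigma> $$ (i,i)))"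
  have \<Sigma>\<Sigma>': "\<Sigma> * \<Sigma>' = 1\<^sub>m s"
    unfolding \<Sigma>'_def using pos by (intro diagonal_mat_right_inverse[OF \<Sigma> diag]) force
  have \<Sigma>': "\<Sigma>' \<in> carrier_mat s s" unfolding \<Sigma>'_def by simp
  have Q': "mat_adjoint Q \<in> carrier_mat s (dim_col M)" using Q by simp
  have "(\<Sigma> * mat_adjoint Q) * (Q * \<Sigma>') = \<Sigma> * (mat_adjoint Q * (Q * \<Sigma>'))"
    using \<Sigma> Q Q' \<Sigma>' by (intro assoc_mult_mat) auto
  also have "\<dots> = \<Sigma> * \<Sigma>'" using assoc_mult_mat[OF Q' Q \<Sigma>'] QQ \<Sigma>' by simp
  also have "\<dots> = 1\<^sub>m s" by (rule \<Sigma>\<Sigma>')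
  finally have "col_space (P * (\<Sigma> * mat_adjoint Q)) = col_space P"
    using \<Sigma> Q Q' \<Sigma>' by (intro col_space_mult_right_invertible[OF P, where m = "dim_col M"]) auto
  then show ?thesis unfolding M by (simp add: assoc_mult_mat[OF P \<Sigma> Q'])
qed

lemma scalar_prod_mat_adjoint:
  fixes U :: "'a :: conjugatable_field mat"
  assumes U: "U \<in> carrier_mat n r" and v: "v \<in> carrier_vec r" and w: "w \<in> carrier_vec n"
  shows "conjugate v \<bullet> (mat_adjoint U *\<^sub>v w) = conjugate (U *\<^sub>v v) \<bullet> w"
proof -
  have "conjugate v \<bullet> (mat_adjoint U *\<^sub>v w) = (\<Sum>i<r. \<Sum>j<n. conjugate (v $ i) * conjugate (U $$ (j,i)) * w $ j)"
    using U v w by (simp add: mat_adjoint_def scalar_prod_def lessThan_atLeast0 sum_distrib_left mult.assoc)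
  also have "\<dots> = (\<Sum>j<n. \<Sum>i<r. conjugate (U $$ (j,i)) * conjugate (v $ i) * w $ j)"
    by (subst sum.swap) (simp add: mult_ac)
  also have "\<dots> = conjugate (U *\<^sub>v v) \<bullet> w"
    using U v w by (simp add: scalar_prod_def lessThan_atLeast0 sum_distrib_right sum_conjugate conjugate_dist_mul)
  finally show ?thesis .
qed

lemma lin_indpt_cols_imp_left_inverse:
  fixes U :: "complex mat"
  assumes U: "U \<in> carrier_mat n r" and dist: "distinct (cols U)"
    and indpt: "clin_indpt n (set (cols U))"
  obtains L where "L \<in> carrier_mat r n" and "L * U = 1\<^sub>m r"
proof -
  interpret vec_space "TYPE(complex)" n .
  define G where "G = mat_adjoint U * U"
  have U': "mat_adjoint U \<in> carrier_mat r n" using U by simp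
  have G: "G \<in> carrier_mat r r" unfolding G_def by (rule mult_carrier_mat[OF U' U])
  have "Determinant.det G \<noteq> 0"
  proof
    assume "Determinant.det G = 0"
    then obtain v where v: "v \<in> carrier_vec r" "v \<noteq> 0\<^sub>v r" and Gv: "G *\<^sub>v v = 0\<^sub>v r"
      using det_0_iff_vec_prod_zero[OF G] by blast
    define w where "w = U *\<^sub>v v"
    have w: "w \<in> carrier_vec n" unfolding w_def using U v by simp
    have "w \<bullet>c w = conjugate v \<bullet> (mat_adjoint U *\<^sub>v w)"
      using scalar_prod_mat_adjoint[OF U v(1) w] conjugate_vec_sprod_comm[OF w w] unfolding w_def by simp
    also have "\<dots> = conjugate v \<bullet> (G *\<^sub>v v)"
      unfolding G_def w_def by (simp add: assoc_mult_mat_vec[OF U' U v(1)])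
    finally have "w = 0\<^sub>v n" using Gv v w by simp
    then have "lin_dep (set (cols U))" using lin_depI[OF U v(1,2)] dist unfolding w_def by blast
    then show False using indpt unfolding clin_indpt_def by blast
  qed
  then obtain G' where G': "G' \<in> carrier_mat r r" "G' * G = 1\<^sub>m r"
    using det_non_zero_imp_unit[OF G] unfolding Units_def by (auto simp: ring_mat_simps)
  show thesis
  proof
    show "G' * mat_adjoint U \<in> carrier_mat r n" using G' U' by simp
    show "G' * mat_adjoint U * U = 1\<^sub>m r"
      using G' U U' unfolding G_def by (simp add: assoc_mult_mat[OF G'(1) U' U])
  qed
qed

lemma slice_comb_sym_tensor:
  fixes u :: "nat \<Rightarrow> complex Matrix.vec"
  assumes "\<And>l. l < r \<Longrightarrow> u l \<in> carrier_vec n"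
  defines "U \<equiv> mat_of_cols n (map u [0..<r])"
  shows "slice_comb n (sym_tensor r u) \<alpha> = U * mat_diag r (\<lambda>l. \<Sum>k<n. \<alpha> k * u l $ k) * U\<^sup>T"
proof (rule eq_matI)
  fix i j assume "i < dim_row (U * mat_diag r (\<lambda>l. \<Sum>k<n. \<alpha> k * u l $ k) * U\<^sup>T)"
    and "j < dim_col (U * mat_diag r (\<lambda>l. \<Sum>k<n. \<alpha> k * u l $ k) * U\<^sup>T)"
  then have ij: "i < n" "j < n" unfolding U_def by auto
  have U: "U \<in> carrier_mat n r" unfolding U_def using mat_of_cols_carrier[of n "map u [0..<r]"] by simp
  have "(U * mat_diag r (\<lambda>l. \<Sum>k<n. \<alpha> k * u l $ k) * U\<^sup>T) $$ (i,j)
      = (\<Sum>l<r. u l $ i * (\<Sum>k<n. \<alpha> k * u l $ k) * u l $ j)"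
    using ij U unfolding mat_diag_mult_right[OF U]
    by (simp add: scalar_prod_def U_def mat_of_cols_index lessThan_atLeast0)
  also have "\<dots> = slice_comb n (sym_tensor r u) \<alpha> $$ (i,j)"
    using ij by (simp add: slice_comb_def slice_def sym_tensor_def sum_distrib_left sum_distrib_right
        mult_ac sum.swap[where A = "{..<n}"])
  finally show "slice_comb n (sym_tensor r u) \<alpha> $$ (i,j)
      = (U * mat_diag r (\<lambda>l. \<Sum>k<n. \<alpha> k * u l $ k) * U\<^sup>T) $$ (i,j)" ..
qed (auto simp: U_def slice_comb_def)

lemma col_space_and_rank_slice_comb_sym_tensor:
  fixes u :: "nat \<Rightarrow> complex Matrix.vec"
  assumes u_dim: "\<And>l. l < r \<Longrightarrow> u l \<in> carrier_vec n"
    and u_inj: "inj_on u {..<r}"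
    and u_indep: "clin_indpt n (u ` {..<r})"
    and nondeg: "\<And>l. l < r \<Longrightarrow> (\<Sum>k<n. \<alpha> k * u l $ k) \<noteq> 0"
  shows "vec_space.col_space n (slice_comb n (sym_tensor r u) \<alpha>) = cspan n (u ` {..<r})"
    and "vec_space.rank n (slice_comb n (sym_tensor r u) \<alpha>) = r"
proof -
  interpret vec_space "TYPE(complex)" n .
  define U where "U = mat_of_cols n (map u [0..<r])"
  define D where "D = mat_diag r (\<lambda>l. \<Sum>k<n. \<alpha> k * u l $ k)"
  have U: "U \<in> carrier_mat n r" unfolding U_def using mat_of_cols_carrier[of n "map u [0..<r]"] by simp
  have D: "D \<in> carrier_mat r r" unfolding D_def by simp
  have U_cols: "cols U = map u [0..<r]" unfolding U_def using u_dim by (intro cols_mat_of_cols) auto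
  then have U_cols_set: "set (cols U) = u ` {..<r}" by auto
  have U_distinct: "distinct (cols U)" using u_inj by (simp add: U_cols distinct_map lessThan_atLeast0)
  have U_indpt: "clin_indpt n (set (cols U))" using u_indep by (simp add: U_cols_set)
  obtain L where L: "L \<in> carrier_mat r n" "L * U = 1\<^sub>m r"
    using lin_indpt_cols_imp_left_inverse[OF U U_distinct U_indpt] .
  define D' where "D' = mat_diag r (\<lambda>l. inverse (D $$ (l,l)))"
  have D': "D' \<in> carrier_mat r r" unfolding D'_def by simp
  have DD': "D * D' = 1\<^sub>m r"
    unfolding D'_def using nondeg
    by (intro diagonal_mat_right_inverse[OF D]) (auto simp: D_def mat_diag_def diagonal_mat_def)
  have UT: "U\<^sup>T \<in> carrier_mat r n" and LT: "L\<^sup>T \<in> carrier_mat n r" using U L by auto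
  have "(D * U\<^sup>T) * (L\<^sup>T * D') = D * ((U\<^sup>T * L\<^sup>T) * D')"
    using assoc_mult_mat[OF D UT, of "L\<^sup>T * D'" r] assoc_mult_mat[OF UT LT D'] LT D' by simp
  also have "U\<^sup>T * L\<^sup>T = 1\<^sub>m r" using transpose_mult[OF L(1) U] L(2) by simp
  finally have "col_space (U * (D * U\<^sup>T)) = col_space U"
    using U D L D' DD' by (intro col_space_mult_right_invertible[where m = n and C = "L\<^sup>T * D'"]) auto
  moreover have "slice_comb n (sym_tensor r u) \<alpha> = U * D * U\<^sup>T"
    unfolding U_def D_def using u_dim by (rule slice_comb_sym_tensor)
  ultimately have M: "col_space (slice_comb n (sym_tensor r u) \<alpha>) = col_space U"
    using assoc_mult_mat[OF U D UT] by simp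
  then show "col_space (slice_comb n (sym_tensor r u) \<alpha>) = cspan n (u ` {..<r})"
    unfolding col_space_def cspan_def U_cols_set .
  have "rank U = r" using lin_indpt_full_rank[OF U U_distinct] U_indpt unfolding clin_indpt_def .
  then show "rank (slice_comb n (sym_tensor r u) \<alpha>) = r"
    using M unfolding rank_def col_space_def by simp
qed

lemma compact_svd_slice_comb_sym_tensor:
  fixes u :: "nat \<Rightarrow> complex Matrix.vec"
  assumes u_dim: "\<And>l. l < r \<Longrightarrow> u l \<in> carrier_vec n"
    and u_inj: "inj_on u {..<r}"
    and u_indep: "clin_indpt n (u ` {..<r})"
    and nondeg: "\<And>l. l < r \<Longrightarrow> (\<Sum>k<n. \<alpha> k * u l $ k) \<noteq> 0"
    and svd: "compact_svd (slice_comb n (sym_tensor r u) \<alpha>) s P \<Sigma> Q"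
  shows "s = r \<and> P \<in> carrier_mat n r \<and> semi_unitary P \<and> cspan n (set (cols P)) = cspan n (u ` {..<r})"
proof -
  interpret vec_space "TYPE(complex)" n .
  note M = col_space_and_rank_slice_comb_sym_tensor[OF u_dim u_inj u_indep nondeg]
  have dim: "dim_row (slice_comb n (sym_tensor r u) \<alpha>) = n" by (simp add: slice_comb_def)
  have "s = r" using svd M(2) unfolding compact_svd_def dim by simp
  moreover have "P \<in> carrier_mat n r" "semi_unitary P"
    using svd \<open>s = r\<close> unfolding compact_svd_def dim by simp_all
  moreover have "cspan n (set (cols P)) = cspan n (u ` {..<r})"
    using compact_svd_col_space[OF svd] M(1) unfolding dim col_space_def cspan_def by simp
  ultimately show ?thesis by blast
qed

lemma card_linear_form_zero_le:
  fixes c :: "nat \<Rightarrow> 'a :: field" and S :: "'a set"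
  assumes k0: "k0 < n" and c: "c k0 \<noteq> 0" and S: "finite S"
  shows "card {\<alpha> \<in> PiE {..<n} (\<lambda>_. S). (\<Sum>k<n. \<alpha> k * c k) = 0} * card S
           \<le> card (PiE {..<n} (\<lambda>_. S))"
proof -
  define K where "K = {..<n} - {k0}"
  define solve where "solve \<beta> = \<beta>(k0 := - (\<Sum>k\<in>K. \<beta> k * c k) / c k0)" for \<beta> :: "nat \<Rightarrow> 'a"
  have split: "(\<Sum>k<n. \<alpha> k * c k) = \<alpha> k0 * c k0 + (\<Sum>k\<in>K. \<alpha> k * c k)" for \<alpha>
    unfolding K_def using k0 by (simp add: sum.remove)
  have fin: "finite (PiE K (\<lambda>_. S))" using S unfolding K_def by (simp add: finite_PiE)
  have "{\<alpha> \<in> PiE {..<n} (\<lambda>_. S). (\<Sum>k<n. \<alpha> k * c k) = 0} \<subseteq> solve ` PiE K (\<lambda>_. S)"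
  proof (intro subsetI, elim CollectE conjE)
    fix \<alpha> assume \<alpha>: "\<alpha> \<in> PiE {..<n} (\<lambda>_. S)" and zero: "(\<Sum>k<n. \<alpha> k * c k) = 0"
    have "\<alpha> k0 * c k0 = - (\<Sum>k\<in>K. \<alpha> k * c k)"
      using zero unfolding split by (simp add: eq_neg_iff_add_eq_0)
    then have "\<alpha> k0 = - (\<Sum>k\<in>K. \<alpha> k * c k) / c k0" using c by (simp add: field_simps)
    moreover have "(\<Sum>k\<in>K. restrict \<alpha> K k * c k) = (\<Sum>k\<in>K. \<alpha> k * c k)" by simp
    moreover have "\<alpha> x = undefined" if "x \<notin> {..<n}" for x using \<alpha> that by (rule PiE_arb)
    ultimately have "\<alpha> = solve (restrict \<alpha> K)"
      unfolding solve_def K_def by (auto simp: fun_eq_iff)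
    moreover have "restrict \<alpha> K \<in> PiE K (\<lambda>_. S)" using \<alpha> unfolding K_def by auto
    ultimately show "\<alpha> \<in> solve ` PiE K (\<lambda>_. S)" by blast
  qed
  then have "card {\<alpha> \<in> PiE {..<n} (\<lambda>_. S). (\<Sum>k<n. \<alpha> k * c k) = 0} \<le> card (solve ` PiE K (\<lambda>_. S))"
    using fin by (intro card_mono) simp_all
  also have "\<dots> \<le> card (PiE K (\<lambda>_. S))" using fin by (rule card_image_le)
  also have "\<dots> = card S ^ (n - 1)" using k0 unfolding K_def by (simp add: card_PiE)
  finally have "card {\<alpha> \<in> PiE {..<n} (\<lambda>_. S). (\<Sum>k<n. \<alpha> k * c k) = 0} * card S
      \<le> card S ^ (n - 1) * card S" by simp
  also have "\<dots> = card (PiE {..<n} (\<lambda>_. S))" using power_minus_mult[of n "card S"] k0 by (simp add: card_PiE)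
  finally show ?thesis .
qed

lemma prob_linear_form_zero_le:
  fixes c :: "nat \<Rightarrow> 'a :: field" and S :: "'a set"
  assumes "k0 < n" and "c k0 \<noteq> 0" and S: "finite S" "S \<noteq> {}"
  shows "measure_pmf.prob (pmf_of_set (PiE {..<n} (\<lambda>_. S))) {\<alpha>. (\<Sum>k<n. \<alpha> k * c k) = 0}
           \<le> 1 / card S"
proof -
  let ?A = "PiE {..<n} (\<lambda>_. S)"
  have A: "finite ?A" "?A \<noteq> {}" using S by (simp_all add: finite_PiE PiE_eq_empty_iff)
  have "real (card (?A \<inter> {\<alpha>. (\<Sum>k<n. \<alpha> k * c k) = 0})) * card S \<le> card ?A"
    using card_linear_form_zero_le[of k0 n c S] assms by (simp add: Int_def conj_commute flip: of_nat_mult)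
  then show ?thesis
    using A S by (simp add: measure_pmf_of_set field_simps card_gt_0_iff)
qed

lemma clin_indpt_imp_nonzero_coordinate:
  fixes v :: "complex Matrix.vec"
  assumes "v \<in> A" and "A \<subseteq> carrier_vec n" and "clin_indpt n A"
  obtains k where "k < n" and "v $ k \<noteq> 0"
proof -
  interpret vec_space "TYPE(complex)" n .
  have "(UNIV :: complex set) \<noteq> {0}" by (metis UNIV_I singletonD zero_neq_one)
  then have "0\<^sub>v n \<notin> A"
    using zero_nin_lin_indpt[of A] assms(2,3) unfolding clin_indpt_def by (simp add: class_ring_simps)
  then have "v \<noteq> 0\<^sub>v n" using assms(1) by blast
  moreover have v: "v \<in> carrier_vec n" using assms(1,2) by blast
  ultimately show thesis using that by (metis carrier_vecD eq_vecI index_zero_vec)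
qed

theorem theorem4p3:
  fixes n r :: nat and u :: "nat \<Rightarrow> complex Matrix.vec" and S :: "complex set"
  assumes u_dim: "\<And>l. l < r \<Longrightarrow> u l \<in> carrier_vec n"
    and u_inj: "inj_on u {..<r}"
    and u_indep: "clin_indpt n (u ` {..<r})"
    and S_fin: "finite S" and S_ne: "S \<noteq> {}"
  shows "measure_pmf.prob (pmf_of_set (PiE {..<n} (\<lambda>_. S)))
           {\<alpha>. \<forall>s P \<Sigma> Q. compact_svd (slice_comb n (sym_tensor r u) \<alpha>) s P \<Sigma> Q \<longrightarrow>
                 s = r \<and> P \<in> carrier_mat n r \<and> semi_unitary P \<and>
                 cspan n (set (cols P)) = cspan n (u ` {..<r})}
         \<ge> 1 - real r / real (card S)"
  (is "measure_pmf.prob ?p ?good \<ge> _")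
proof -
  define bad where "bad l = {\<alpha>. (\<Sum>k<n. \<alpha> k * u l $ k) = 0}" for l
  have "measure_pmf.prob ?p (bad l) \<le> 1 / card S" if "l < r" for l
  proof -
    have "u ` {..<r} \<subseteq> carrier_vec n" using u_dim by auto
    moreover have "u l \<in> u ` {..<r}" using that by simp
    ultimately obtain k where "k < n" "u l $ k \<noteq> 0"
      using clin_indpt_imp_nonzero_coordinate[OF _ _ u_indep] by metis
    then show ?thesis unfolding bad_def using S_fin S_ne by (rule prob_linear_form_zero_le)
  qed
  then have "(\<Sum>l<r. measure_pmf.prob ?p (bad l)) \<le> real r / card S"
    using sum_mono[of "{..<r}" "\<lambda>l. measure_pmf.prob ?p (bad l)" "\<lambda>_. 1 / card S"] by simp
  moreover have "measure_pmf.prob ?p (\<Union>l<r. bad l) \<le> (\<Sum>l<r. measure_pmf.prob ?p (bad l))"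
    by (rule measure_pmf.finite_measure_subadditive_finite) simp_all
  moreover have "UNIV - (\<Union>l<r. bad l) \<subseteq> ?good"
  proof
    fix \<alpha> assume "\<alpha> \<in> UNIV - (\<Union>l<r. bad l)"
    then have nondeg: "\<And>l. l < r \<Longrightarrow> (\<Sum>k<n. \<alpha> k * u l $ k) \<noteq> 0" unfolding bad_def by blast
    show "\<alpha> \<in> ?good" using compact_svd_slice_comb_sym_tensor[OF u_dim u_inj u_indep nondeg] by blast
  qed
  then have "measure_pmf.prob ?p (UNIV - (\<Union>l<r. bad l)) \<le> measure_pmf.prob ?p ?good"
    by (rule measure_pmf.finite_measure_mono) simp
  ultimately show ?thesis
    using measure_pmf.prob_compl[of "\<Union>l<r. bad l" ?p] by simp
qed

end
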